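(* Consider an AoI SHS as in the context with matrices $\mathbf{D}$ and $\mathbf{R}$ as defined there, and let $\bar{\mathbf{v}}^{0}=[\bar{\mathbf{v}}^{0}_{0}\ \cdots\ \bar{\mathbf{v}}^{0}_{q_{\max}}]$ be the stationary (duplicated) state-probability row vector. If $\bar{\mathbf{v}}^{0}>\mathbf{0}$ (componentwise) and there exists a non-negative row vector $\bar{\mathbf{v}}^{1}\in\mathbb{R}^{n|\mathcal{Q}|}$ solving $\bar{\mathbf{v}}^{1}\mathbf{D}=\bar{\mathbf{v}}^{0}+\bar{\mathbf{v}}^{1}\mathbf{R}$, then all eigenvalues of $\mathbf{R}-\mathbf{D}$ have strictly negative real parts.
   Context: An AoI SHS: discrete state $q(t)\in\mathcal{Q}=\{0,\ldots,q_{\max}\}$ is a finite-state continuous-time Markov chain with transitions $l\in\mathcal{L}$ from $q_l$ to $q'_l$ at fixed rates $\lambda^{(l)}>0$ (self-transitions and parallel transitions allowed); the continuous state $\mathbf{x}(t)\in\mathbb{R}^n$ grows at unit rate in each component between transitions and is reset to $\mathbf{x}\mathbf{A}_l$ at transition $l$, where $\mathbf{A}_l$ is an $n\times n$ binary matrix with at most one $1$ per column. Let $d_{\bar q}=\sum_{l:q_l=\bar q}\lambda^{(l)}$, $\mathbf{D}=\mathrm{diag}(d_0\mathbf{I}_n,\ldots,d_{q_{\max}}\mathbf{I}_n)$ (an $n|\mathcal{Q}|\times n|\mathcal{Q}|$ matrix), and let $\mathbf{R}$ be the block matrix with $n\times n$ blocks $\mathbf{R}_{i,j}=\sum_{l\in\mathcal{L}_{i,j}}\lambda^{(l)}\mathbf{A}_l$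 for $i,j\in\mathcal{Q}$, where $\mathcal{L}_{i,j}=\{l: q_l=i,q'_l=j\}$. The vector $\bar{\mathbf{v}}^{0}_{\bar q}=[1\ \cdots\ 1]\pi_{\bar q}\in\mathbb{R}^n$, where $\pi$ is a stationary distribution of $q(t)$. *)

theory Defs
  imports "Jordan_Normal_Form.Char_Poly"
begin

text \<open>An AoI SHS with discrete states {0..qmax}, continuous state dimension n,
  transitions indexed by a finite set L; transition l goes from src l to dst l
  at rate lam l and resets x to x A_l.  Block matrices of size n(qmax+1) are
  indexed by q*n+i (block q, component i < n).\<close>

definition aoi_shs :: "nat \<Rightarrow> nat \<Rightarrow> 'l set \<Rightarrow> ('l \<Rightarrow> nat) \<Rightarrow> ('l \<Rightarrow> nat)
    \<Rightarrow> ('l \<Rightarrow> real) \<Rightarrow> ('l \<Rightarrow> real mat) \<Rightarrow> bool" where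
  "aoi_shs n qmax L src dst lam A \<longleftrightarrow> finite L \<and>
     (\<forall>l\<in>L. src l \<le> qmax \<and> dst l \<le> qmax \<and> lam l > 0 \<and> A l \<in> carrier_mat n n \<and>
        (\<forall>i<n. \<forall>j<n. A l $$ (i, j) = 0 \<or> A l $$ (i, j) = 1) \<and>
        (\<forall>j<n. card {i. i < n \<and> A l $$ (i, j) = 1} \<le> 1))"

text \<open>Total exit rate d_q (including self-transitions).\<close>
definition exit_rate :: "'l set \<Rightarrow> ('l \<Rightarrow> nat) \<Rightarrow> ('l \<Rightarrow> real) \<Rightarrow> nat \<Rightarrow> real" where
  "exit_rate L src lam q = (\<Sum>l\<in>{l\<in>L. src l = q}. lam l)"

definition generator :: "'l set \<Rightarrow> ('l \<Rightarrow> nat) \<Rightarrow> ('l \<Rightarrow> nat) \<Rightarrow> ('l \<Rightarrow> real)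
    \<Rightarrow> nat \<Rightarrow> nat \<Rightarrow> real" where
  "generator L src dst lam i j =
     (if i = j then - (\<Sum>l\<in>{l\<in>L. src l = i \<and> dst l \<noteq> i}. lam l)
      else (\<Sum>l\<in>{l\<in>L. src l = i \<and> dst l = j}. lam l))"

definition stationary_dist :: "nat \<Rightarrow> 'l set \<Rightarrow> ('l \<Rightarrow> nat) \<Rightarrow> ('l \<Rightarrow> nat)
    \<Rightarrow> ('l \<Rightarrow> real) \<Rightarrow> (nat \<Rightarrow> real) \<Rightarrow> bool" where
  "stationary_dist qmax L src dst lam \<pi> \<longleftrightarrow>
     (\<forall>q\<le>qmax. \<pi> q \<ge> 0) \<and> (\<Sum>q\<le>qmax. \<pi> q) = 1 \<and>
     (\<forall>j\<le>qmax. (\<Sum>i\<le>qmax. \<pi> i * generator L src dst lam i j) = 0)"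

definition D_mat :: "nat \<Rightarrow> nat \<Rightarrow> 'l set \<Rightarrow> ('l \<Rightarrow> nat) \<Rightarrow> ('l \<Rightarrow> real) \<Rightarrow> real mat" where
  "D_mat n qmax L src lam = mat (n * (qmax + 1)) (n * (qmax + 1))
     (\<lambda>(r, c). if r = c then exit_rate L src lam (r div n) else 0)"

definition R_mat :: "nat \<Rightarrow> nat \<Rightarrow> 'l set \<Rightarrow> ('l \<Rightarrow> nat) \<Rightarrow> ('l \<Rightarrow> nat)
    \<Rightarrow> ('l \<Rightarrow> real) \<Rightarrow> ('l \<Rightarrow> real mat) \<Rightarrow> real mat" where
  "R_mat n qmax L src dst lam A = mat (n * (qmax + 1)) (n * (qmax + 1))
     (\<lambda>(r, c). \<Sum>l\<in>{l\<in>L. src l = r div n \<and> dst l = c div n}. lam l * A l $$ (r mod n, c mod n))"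

definition v0_vec :: "nat \<Rightarrow> nat \<Rightarrow> (nat \<Rightarrow> real) \<Rightarrow> real vec" where
  "v0_vec n qmax \<pi> = vec (n * (qmax + 1)) (\<lambda>k. \<pi> (k div n))"

end

theory Submission
  imports Defs
begin

text \<open>The matrix \<open>R - D\<close> is Metzler (nonnegative off the diagonal), and the hypothesis says that
  the nonnegative vector \<open>v\<^sup>1\<close> satisfies \<open>v\<^sup>1 (R - D) = - v\<^sup>0 < 0\<close>.  If \<open>x\<close> is an eigenvector of
  \<open>R - D\<close> with eigenvalue \<open>k\<close>, the triangle inequality applied to each row gives
  \<open>Re k |x| \<le> (R - D) |x|\<close> componentwise.  Pairing with \<open>v\<^sup>1\<close> yields
  \<open>Re k (v\<^sup>1 \<bullet> |x|) \<le> - v\<^sup>0 \<bullet> |x| < 0\<close>, and since \<open>v\<^sup>1 \<bullet> |x| \<ge> 0\<close> this forces \<open>Re k < 0\<close>.\<close>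

definition metzler_mat :: "'a :: {zero, ord} mat \<Rightarrow> bool" where
  "metzler_mat M \<longleftrightarrow> (\<forall>i < dim_row M. \<forall>j < dim_col M. i \<noteq> j \<longrightarrow> M $$ (i, j) \<ge> 0)"

lemma metzler_eigenvector_Re_bound:
  fixes M :: "real mat" and x :: "complex vec"
  assumes M: "M \<in> carrier_mat N N" "metzler_mat M" and x: "x \<in> carrier_vec N"
    and eigen: "map_mat complex_of_real M *\<^sub>v x = k \<cdot>\<^sub>v x" and i: "i < N"
  shows "Re k * cmod (x $ i) \<le> (M *\<^sub>v map_vec cmod x) $ i"
proof -
  let ?others = "{..<N} - {i}"
  have row_eq: "k * x $ i = (\<Sum>j<N. complex_of_real (M $$ (i, j)) * x $ j)"
    using arg_cong[OF eigen, of "\<lambda>v. v $ i"] M x i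
    by (simp add: scalar_prod_def row_def atLeast0LessThan)
  have "(k - M $$ (i, i)) * x $ i = (\<Sum>j\<in>?others. complex_of_real (M $$ (i, j)) * x $ j)"
    using row_eq i by (simp add: sum.remove algebra_simps)
  then have "cmod (k - M $$ (i, i)) * cmod (x $ i)
      \<le> (\<Sum>j\<in>?others. cmod (complex_of_real (M $$ (i, j)) * x $ j))"
    by (metis norm_mult norm_sum)
  also have "\<dots> = (\<Sum>j\<in>?others. M $$ (i, j) * cmod (x $ j))"
    using M i by (intro sum.cong) (auto simp: metzler_mat_def norm_mult)
  finally have off_diag: "cmod (k - M $$ (i, i)) * cmod (x $ i)
      \<le> (\<Sum>j\<in>?others. M $$ (i, j) * cmod (x $ j))" .
  have "Re k - M $$ (i, i) \<le> cmod (k - M $$ (i, i))"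
    using complex_Re_le_cmod[of "k - M $$ (i, i)"] by simp
  then have "Re k * cmod (x $ i) \<le> M $$ (i, i) * cmod (x $ i) + cmod (k - M $$ (i, i)) * cmod (x $ i)"
    by (simp add: mult_right_mono flip: distrib_right)
  also have "\<dots> \<le> (\<Sum>j<N. M $$ (i, j) * cmod (x $ j))"
    using off_diag i by (simp add: sum.remove)
  also have "\<dots> = (M *\<^sub>v map_vec cmod x) $ i"
    using M x i by (simp add: scalar_prod_def row_def atLeast0LessThan)
  finally show ?thesis .
qed

lemma scalar_prod_pos:
  fixes u y :: "real vec"
  assumes "u \<in> carrier_vec N" "y \<in> carrier_vec N"
    and "\<forall>i < N. u $ i > 0" "\<forall>i < N. y $ i \<ge> 0" and "j < N" "y $ j > 0"
  shows "u \<bullet> y > 0"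
proof -
  have "0 < u $ j * y $ j"
    using assms by simp
  also have "\<dots> \<le> (\<Sum>i\<in>{0..<N}. u $ i * y $ i)"
    using assms by (intro member_le_sum) (auto intro: mult_nonneg_nonneg less_imp_le)
  finally show ?thesis
    using assms by (simp add: scalar_prod_def)
qed

lemma metzler_eigenvalue_Re_neg:
  fixes M :: "real mat" and w u :: "real vec"
  assumes M: "M \<in> carrier_mat N N" "metzler_mat M"
    and w: "w \<in> carrier_vec N" "\<forall>i < N. w $ i \<ge> 0"
    and u: "u \<in> carrier_vec N" "\<forall>i < N. u $ i > 0"
    and wM: "transpose_mat M *\<^sub>v w = - u"
    and ev: "eigenvalue (map_mat complex_of_real M) k"
  shows "Re k < 0"
proof -
  obtain x where x: "x \<in> carrier_vec N" "x \<noteq> 0\<^sub>v N"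
    and eigen: "map_mat complex_of_real M *\<^sub>v x = k \<cdot>\<^sub>v x"
    using ev M unfolding eigenvalue_def eigenvector_def by auto
  define y where "y = map_vec cmod x"
  have y: "y \<in> carrier_vec N" "\<forall>i < N. y $ i \<ge> 0"
    using x by (auto simp: y_def)
  obtain j where "j < N" "x $ j \<noteq> 0"
    using x by (metis eq_vecI carrier_vecD index_zero_vec)
  then have j: "j < N" "y $ j > 0"
    using x by (simp_all add: y_def)
  have "Re k * (w \<bullet> y) = (\<Sum>i\<in>{0..<N}. w $ i * (Re k * y $ i))"
    using w y by (simp add: scalar_prod_def sum_distrib_left mult_ac)
  also have "\<dots> \<le> (\<Sum>i\<in>{0..<N}. w $ i * (M *\<^sub>v y) $ i)"
    using metzler_eigenvector_Re_bound[OF M x(1) eigen] w x(1)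
    by (intro sum_mono mult_left_mono) (auto simp: y_def)
  also have "\<dots> = w \<bullet> (M *\<^sub>v y)"
    using M by (simp add: scalar_prod_def)
  also have "\<dots> = (transpose_mat M *\<^sub>v w) \<bullet> y"
    using transpose_vec_mult_scalar[OF M(1) y(1) w(1)] by simp
  also have "\<dots> = - (u \<bullet> y)"
    using wM u y by simp
  also have "\<dots> < 0"
    using scalar_prod_pos[OF u(1) y(1) u(2) y(2) j] by simp
  finally have "Re k * (w \<bullet> y) < 0" .
  moreover have "w \<bullet> y \<ge> 0"
    using w y by (auto simp: scalar_prod_def intro!: sum_nonneg)
  ultimately show ?thesis
    by (metis mult_nonneg_nonneg not_le)
qed

lemma D_mat_carrier: "D_mat n qmax L src lam \<in> carrier_mat (n * (qmax + 1)) (n * (qmax + 1))"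
  by (simp add: D_mat_def)

lemma R_mat_carrier: "R_mat n qmax L src dst lam A \<in> carrier_mat (n * (qmax + 1)) (n * (qmax + 1))"
  by (simp add: R_mat_def)

lemma v0_vec_carrier: "v0_vec n qmax \<pi> \<in> carrier_vec (n * (qmax + 1))"
  by (simp add: v0_vec_def)

lemma metzler_R_mat_minus_D_mat:
  assumes "aoi_shs n qmax L src dst lam A"
  shows "metzler_mat (R_mat n qmax L src dst lam A - D_mat n qmax L src lam)"
  unfolding metzler_mat_def
proof (intro allI impI)
  fix i j
  assume ij: "i < dim_row (R_mat n qmax L src dst lam A - D_mat n qmax L src lam)"
    "j < dim_col (R_mat n qmax L src dst lam A - D_mat n qmax L src lam)" "i \<noteq> j"
  have "0 \<le> lam l * A l $$ (i mod n, j mod n)" if "l \<in> L" for l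
  proof -
    have "0 < n"
      using ij by (cases n) (auto simp: D_mat_def)
    then have "lam l > 0" "A l $$ (i mod n, j mod n) \<in> {0, 1}"
      using assms \<open>l \<in> L\<close> unfolding aoi_shs_def by auto
    then show ?thesis
      by auto
  qed
  then show "0 \<le> (R_mat n qmax L src dst lam A - D_mat n qmax L src lam) $$ (i, j)"
    using ij by (auto simp: R_mat_def D_mat_def intro: sum_nonneg)
qed

theorem lemma2:
  fixes n qmax :: nat and L :: "'l set" and src dst :: "'l \<Rightarrow> nat"
    and lam :: "'l \<Rightarrow> real" and A :: "'l \<Rightarrow> real mat" and \<pi> :: "nat \<Rightarrow> real"
  assumes shs: "aoi_shs n qmax L src dst lam A"
    and stat: "stationary_dist qmax L src dst lam \<pi>"
    and v0_pos: "\<forall>k < n * (qmax + 1). v0_vec n qmax \<pi> $ k > 0"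
    and v1: "v1 \<in> carrier_vec (n * (qmax + 1))"
    and v1_nonneg: "\<forall>k < n * (qmax + 1). v1 $ k \<ge> 0"
    and v1_eq: "transpose_mat (D_mat n qmax L src lam) *\<^sub>v v1
                = v0_vec n qmax \<pi> + transpose_mat (R_mat n qmax L src dst lam A) *\<^sub>v v1"
  shows "\<forall>k. eigenvalue (map_mat complex_of_real
             (R_mat n qmax L src dst lam A - D_mat n qmax L src lam)) k \<longrightarrow> Re k < 0"
proof -
  let ?R = "R_mat n qmax L src dst lam A" and ?D = "D_mat n qmax L src lam"
    and ?v0 = "v0_vec n qmax \<pi>"
  have "transpose_mat (?R - ?D) *\<^sub>v v1 = transpose_mat ?R *\<^sub>v v1 - transpose_mat ?D *\<^sub>v v1"
    by (metis transpose_minus transpose_carrier_mat minus_mult_distrib_mat_vec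
        R_mat_carrier D_mat_carrier v1)
  also have "\<dots> = - ?v0"
    using v1 unfolding v1_eq by (intro eq_vecI) (auto simp: R_mat_def v0_vec_def)
  finally have v1_lyapunov: "transpose_mat (?R - ?D) *\<^sub>v v1 = - ?v0" .
  have "?R - ?D \<in> carrier_mat (n * (qmax + 1)) (n * (qmax + 1))"
    by (rule minus_carrier_mat[OF D_mat_carrier])
  then show ?thesis
    using metzler_eigenvalue_Re_neg[OF _ metzler_R_mat_minus_D_mat[OF shs] v1 v1_nonneg
        v0_vec_carrier v0_pos v1_lyapunov] by blast
qed

end
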